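(* Let $\Gamma\subset\mathbb{F}_q[x]^2$ be an $\mathbb{F}_q[x]$-lattice of rank $2$ with $\mathrm{vol}(\Gamma)=q^m$, and let $r,s\ge0$ be integers. Then the number of vectors $v=(g,h)\in\Gamma$ that are primitive in $\Gamma$ and satisfy $\deg g\le r$, $\deg h\le s$ is at most $\max(q,q^{r+s-m+2})$.
   Context: An $\mathbb{F}_q[x]$-lattice of rank $n$ is an $\mathbb{F}_q[x]$-submodule $\Gamma\subset\mathbb{F}_q[x]^n$ of finite index; $\mathrm{vol}(\Gamma)=[\mathbb{F}_q[x]^n:\Gamma]$. Degrees of polynomials use $\deg0=-\infty$. $v\in\Gamma$ is primitive in $\Gamma$ if $v$ cannot be written as $v=aw$ with $w\in\Gamma$ and $a\in\mathbb{F}_q[x]$, $\deg a\ge1$. *)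

theory Defs
  imports "HOL-Computational_Algebra.Polynomial" "HOL-Library.Product_Plus" "HOL-Library.Cardinality"
begin

definition vsmult :: "'a::comm_ring_1 poly \<Rightarrow> 'a poly \<times> 'a poly \<Rightarrow> 'a poly \<times> 'a poly" where
  "vsmult a v = (a * fst v, a * snd v)"

definition vol2 :: "('a::comm_ring_1 poly \<times> 'a poly) set \<Rightarrow> nat" where
  "vol2 \<Gamma> = card ((\<lambda>v. {v + w | w. w \<in> \<Gamma>}) ` UNIV)"

text \<open>An F_q[x]-lattice of rank 2: a submodule of F_q[x]^2 of finite index.\<close>
definition lattice2 :: "('a::comm_ring_1 poly \<times> 'a poly) set \<Rightarrow> bool" where
  "lattice2 \<Gamma> \<longleftrightarrow> 0 \<in> \<Gamma> \<and> (\<forall>v\<in>\<Gamma>. \<forall>w\<in>\<Gamma>. v + w \<in> \<Gamma>)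
     \<and> (\<forall>a. \<forall>v\<in>\<Gamma>. vsmult a v \<in> \<Gamma>)
     \<and> finite ((\<lambda>v. {v + w | w. w \<in> \<Gamma>}) ` UNIV)"

definition primitive_in :: "('a::comm_ring_1 poly \<times> 'a poly) set \<Rightarrow> 'a poly \<times> 'a poly \<Rightarrow> bool" where
  "primitive_in \<Gamma> v \<longleftrightarrow> v \<in> \<Gamma> \<and>
     \<not> (\<exists>a w. w \<in> \<Gamma> \<and> a \<noteq> 0 \<and> degree a \<ge> 1 \<and> v = vsmult a w)"

end

theory Submission
  imports Defs
begin

(*
  Pick a primitive vector u = t u0 of Gamma in the box, where u0 has coprime coordinates,
  so that det2 u0 y = 1 for some y and (y, u0) is a basis of F_q[x]^2. Primitivity of u
  forces Gamma to meet the line F_q[x] u0 exactly in F_q[x] u. If all lattice vectors of the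
  box lie on this line, the primitive ones are constant multiples of u: at most q of them.
  Otherwise let delta generate the ideal det2 u0 Gamma. The cosets of Gamma are represented
  by the vectors c y + b u0 with deg c < deg delta and deg b < deg t, so m <= deg t + deg delta.
  On the other hand det2 u0 maps the lattice vectors of the box into delta F_q[x] with bounded
  degree, and its fibres are translates of the multiples of u lying in the box; this bounds
  their number by q^(r + s + 2 - deg t - deg delta) <= q^(r + s + 2 - m).
*)

definition polys_deg_lt :: "nat \<Rightarrow> 'a::zero poly set" where
  "polys_deg_lt n = {p. p = 0 \<or> degree p < n}"

definition poly_box :: "nat \<Rightarrow> nat \<Rightarrow> ('a::zero poly \<times> 'a poly) set" where
  "poly_box r s = {v. degree (fst v) \<le> r \<and> degree (snd v) \<le> s}"

definition det2 :: "'a::comm_ring_1 poly \<times> 'a poly \<Rightarrow> 'a poly \<times> 'a poly \<Rightarrow> 'a poly" where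
  "det2 u v = fst u * snd v - snd u * fst v"

lemma polys_deg_lt_Suc:
  "polys_deg_lt (Suc n) = (\<lambda>(c, p). pCons c p) ` (UNIV \<times> polys_deg_lt n)"
proof (intro equalityI subsetI)
  fix x :: "'a poly"
  assume x: "x \<in> polys_deg_lt (Suc n)"
  obtain c p where xcp: "x = pCons c p" by (cases x)
  have "p \<in> polys_deg_lt n"
    using x by (cases "p = 0") (auto simp: polys_deg_lt_def xcp)
  then show "x \<in> (\<lambda>(c, p). pCons c p) ` (UNIV \<times> polys_deg_lt n)"
    using xcp by force
qed (auto simp: polys_deg_lt_def split: if_splits)

lemma finite_polys_deg_lt: "finite (polys_deg_lt n :: 'a::{finite,zero} poly set)"
  and card_polys_deg_lt: "card (polys_deg_lt n :: 'a::{finite,zero} poly set) = CARD('a) ^ n"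
proof (induction n)
  case 0
  have "polys_deg_lt 0 = {0 :: 'a poly}" by (auto simp: polys_deg_lt_def)
  { case 1 show ?case by (simp add: \<open>polys_deg_lt 0 = {0}\<close>) }
  { case 2 show ?case by (simp add: \<open>polys_deg_lt 0 = {0}\<close>) }
next
  case (Suc n)
  have inj: "inj_on (\<lambda>(c, p). pCons c p) (UNIV \<times> (polys_deg_lt n :: 'a poly set))"
    by (auto simp: inj_on_def)
  { case 1 show ?case using Suc by (simp add: polys_deg_lt_Suc) }
  { case 2 show ?case using Suc inj
      by (simp add: polys_deg_lt_Suc card_image card_cartesian_product) }
qed

lemma finite_poly_box: "finite (poly_box r s :: ('a::{finite,zero} poly \<times> 'a poly) set)"
proof (rule finite_subset)
  show "poly_box r s \<subseteq> polys_deg_lt (Suc r) \<times> (polys_deg_lt (Suc s) :: 'a poly set)"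
    by (auto simp: poly_box_def polys_deg_lt_def)
qed (simp add: finite_polys_deg_lt)

lemma poly_box_diff:
  fixes v w :: "'a::ab_group_add poly \<times> 'a poly"
  shows "v \<in> poly_box r s \<Longrightarrow> w \<in> poly_box r s \<Longrightarrow> v - w \<in> poly_box r s"
  by (auto simp: poly_box_def intro: degree_diff_le)

lemma card_le_card_image_mult:
  assumes "finite A" and "\<And>y. y \<in> f ` A \<Longrightarrow> card {x \<in> A. f x = y} \<le> n"
  shows "card A \<le> card (f ` A) * n"
proof -
  have "A = (\<Union>y\<in>f ` A. {x \<in> A. f x = y})" by blast
  also have "card \<dots> \<le> (\<Sum>y\<in>f ` A. card {x \<in> A. f x = y})"
    by (rule card_UN_le) (use assms(1) in simp)
  also have "\<dots> \<le> card (f ` A) * n"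
    using sum_bounded_above[of "f ` A" "\<lambda>y. card {x \<in> A. f x = y}" n] assms(2) by simp
  finally show ?thesis .
qed

lemma poly_ideal_principal:
  fixes S :: "'a::field poly set"
  assumes add: "\<And>x y. x \<in> S \<Longrightarrow> y \<in> S \<Longrightarrow> x + y \<in> S"
    and mult: "\<And>a x. x \<in> S \<Longrightarrow> a * x \<in> S"
    and "x0 \<in> S" "x0 \<noteq> 0"
  shows "\<exists>d\<in>S. d \<noteq> 0 \<and> (\<forall>x\<in>S. d dvd x)"
proof -
  define n where "n = (LEAST n. \<exists>d\<in>S. d \<noteq> 0 \<and> degree d = n)"
  have "\<exists>d\<in>S. d \<noteq> 0 \<and> degree d = n"
    unfolding n_def by (rule LeastI[of _ "degree x0"]) (use assms in auto)
  then obtain d where d: "d \<in> S" "d \<noteq> 0" "degree d = n" by blast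
  have minimal: "n \<le> degree e" if "e \<in> S" "e \<noteq> 0" for e
    unfolding n_def by (rule Least_le) (use that in auto)
  have "d dvd x" if x: "x \<in> S" for x
  proof -
    have "x mod d = x + (- (x div d)) * d" by (simp add: minus_div_mult_eq_mod[symmetric])
    then have "x mod d \<in> S" using add mult x d(1) by metis
    then show ?thesis
      using degree_mod_less[OF d(2), of x] minimal d(3) by (metis not_le mod_eq_0_iff_dvd)
  qed
  with d show ?thesis by blast
qed

lemma poly_bezout:
  fixes a b :: "'a::field poly"
  assumes "a \<noteq> 0 \<or> b \<noteq> 0"
  obtains x y where "x * a + y * b \<noteq> 0" "x * a + y * b dvd a" "x * a + y * b dvd b"
proof -
  let ?S = "{x * a + y * b | x y. True}"
  have "a = 1 * a + 0 * b" "b = 0 * a + 1 * b" by simp_all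
  then have ab: "a \<in> ?S" "b \<in> ?S" by blast+
  have "\<exists>d\<in>?S. d \<noteq> 0 \<and> (\<forall>z\<in>?S. d dvd z)"
  proof (rule poly_ideal_principal[of _ "if a \<noteq> 0 then a else b"])
    fix z w assume "z \<in> ?S" "w \<in> ?S"
    then obtain x y x' y' where "z = x * a + y * b" "w = x' * a + y' * b" by blast
    then have "z + w = (x + x') * a + (y + y') * b" by (simp add: algebra_simps)
    then show "z + w \<in> ?S" by blast
  next
    fix c z assume "z \<in> ?S"
    then obtain x y where "z = x * a + y * b" by blast
    then have "c * z = (c * x) * a + (c * y) * b" by (simp add: algebra_simps)
    then show "c * z \<in> ?S" by blast
  qed (use ab assms in auto)
  then show ?thesis using ab that by blast
qed

lemma card_field_ge_2: "2 \<le> CARD('a::{finite,field})"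
proof -
  have "card {0::'a, 1} \<le> CARD('a)" by (rule card_mono) auto
  then show ?thesis by simp
qed

lemma det2_add: "det2 u (v + w) = det2 u v + det2 u w"
  and det2_diff: "det2 u (v - w) = det2 u v - det2 u w"
  and det2_vsmult: "det2 u (vsmult a v) = a * det2 u v"
  and det2_vsmult_left: "det2 (vsmult a u) v = a * det2 u v"
  by (simp_all add: det2_def vsmult_def algebra_simps)

lemma lattice2D:
  assumes "lattice2 \<Gamma>"
  shows lattice2_zero: "0 \<in> \<Gamma>"
    and lattice2_add: "v \<in> \<Gamma> \<Longrightarrow> w \<in> \<Gamma> \<Longrightarrow> v + w \<in> \<Gamma>"
    and lattice2_vsmult: "v \<in> \<Gamma> \<Longrightarrow> vsmult a v \<in> \<Gamma>"
  using assms by (auto simp: lattice2_def)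

lemma lattice2_diff:
  assumes "lattice2 \<Gamma>" "v \<in> \<Gamma>" "w \<in> \<Gamma>"
  shows "v - w \<in> \<Gamma>"
proof -
  have "v + vsmult (-1) w \<in> \<Gamma>" using assms by (simp add: lattice2_add lattice2_vsmult)
  moreover have "v + vsmult (-1) w = v - w" by (simp add: vsmult_def prod_eq_iff)
  ultimately show ?thesis by simp
qed

lemma lattice2_coset_shift:
  assumes "lattice2 \<Gamma>" "\<gamma> \<in> \<Gamma>"
  shows "{z + \<gamma> + w | w. w \<in> \<Gamma>} = {z + w | w. w \<in> \<Gamma>}"
proof (intro equalityI subsetI)
  fix x assume "x \<in> {z + \<gamma> + w | w. w \<in> \<Gamma>}"
  then obtain w where "w \<in> \<Gamma>" "x = z + (\<gamma> + w)" by (auto simp: add.assoc)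
  with assms show "x \<in> {z + w | w. w \<in> \<Gamma>}" by (blast intro: lattice2_add)
next
  fix x assume "x \<in> {z + w | w. w \<in> \<Gamma>}"
  then obtain w where "w \<in> \<Gamma>" "x = z + \<gamma> + (w - \<gamma>)" by auto
  with assms show "x \<in> {z + \<gamma> + w | w. w \<in> \<Gamma>}" by (blast intro: lattice2_diff)
qed

lemma det2_eq_0_imp_vsmult:
  assumes "\<alpha> * fst u + \<beta> * snd u = 1" "det2 u z = 0"
  shows "z = vsmult (\<alpha> * fst z + \<beta> * snd z) u"
proof -
  have d: "fst u * snd z = snd u * fst z" using assms(2) by (simp add: det2_def)
  have "(\<alpha> * fst z + \<beta> * snd z) * fst u = \<alpha> * fst z * fst u + \<beta> * (fst u * snd z)"
    by (simp add: algebra_simps)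
  also have "\<dots> = fst z * (\<alpha> * fst u + \<beta> * snd u)"
    unfolding d by (simp add: algebra_simps)
  finally have fst_eq: "(\<alpha> * fst z + \<beta> * snd z) * fst u = fst z" using assms(1) by simp
  have "(\<alpha> * fst z + \<beta> * snd z) * snd u = \<alpha> * (snd u * fst z) + \<beta> * snd z * snd u"
    by (simp add: algebra_simps)
  also have "\<dots> = snd z * (\<alpha> * fst u + \<beta> * snd u)"
    unfolding d[symmetric] by (simp add: algebra_simps)
  finally have "(\<alpha> * fst z + \<beta> * snd z) * snd u = snd z" using assms(1) by simp
  with fst_eq show ?thesis by (simp add: vsmult_def prod_eq_iff mult.commute)
qed

lemma primitive_in_nonzero:
  fixes v :: "'a::field poly \<times> 'a poly"
  assumes "lattice2 \<Gamma>" "primitive_in \<Gamma> v"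
  shows "v \<noteq> 0"
proof
  assume "v = 0"
  moreover have "(0 :: 'a poly \<times> 'a poly) = vsmult [:0, 1:] 0"
    by (simp add: vsmult_def zero_prod_def)
  moreover have "[:0, 1:] \<noteq> (0 :: 'a poly)" "degree [:0, 1 :: 'a:] = 1" by simp_all
  ultimately show False
    using assms lattice2_zero[OF assms(1)] unfolding primitive_in_def by (metis order_refl)
qed

lemma primitive_in_vsmult_degree:
  fixes a :: "'a::field poly"
  assumes "primitive_in \<Gamma> (vsmult a w)" "w \<in> \<Gamma>"
  shows "degree a = 0"
proof (rule ccontr)
  assume "degree a \<noteq> 0"
  then have "a \<noteq> 0" "1 \<le> degree a" by auto
  with assms show False unfolding primitive_in_def by blast
qed

lemma primitive_in_dvd_multiple:
  fixes t :: "'a::field poly"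
  assumes "lattice2 \<Gamma>" "primitive_in \<Gamma> (vsmult t u)" "t \<noteq> 0" "vsmult c u \<in> \<Gamma>"
  shows "t dvd c"
proof -
  obtain x y where e: "x * t + y * c \<noteq> 0" "x * t + y * c dvd t" "x * t + y * c dvd c"
    using poly_bezout[of t c] assms(3) by blast
  define e where "e = x * t + y * c"
  have "vsmult e u = vsmult x (vsmult t u) + vsmult y (vsmult c u)"
    by (simp add: e_def vsmult_def algebra_simps)
  moreover have "vsmult t u \<in> \<Gamma>" using assms(2) by (simp add: primitive_in_def)
  ultimately have eG: "vsmult e u \<in> \<Gamma>"
    using assms(1,4) by (simp add: lattice2_add lattice2_vsmult)
  have te: "t = (t div e) * e" using e(2) by (simp add: e_def)
  have "vsmult (t div e * e) u = vsmult (t div e) (vsmult e u)" by (simp add: vsmult_def mult.assoc)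
  then have "vsmult t u = vsmult (t div e) (vsmult e u)" by (simp only: te[symmetric])
  then have "degree (t div e) = 0"
    using primitive_in_vsmult_degree[OF _ eG] assms(2) by simp
  moreover have "t div e \<noteq> 0" using te assms(3) by auto
  ultimately have "is_unit (t div e)" by (simp add: is_unit_iff_degree)
  then have "t dvd e" by (subst te) (simp add: mult.commute[of "t div e"] mult_unit_dvd_iff)
  then show ?thesis using e(3) unfolding e_def by (rule dvd_trans)
qed

lemma vsmult_coprime_decomp:
  fixes u :: "'a::field poly \<times> 'a poly"
  assumes "u \<noteq> 0"
  obtains t u0 \<alpha> \<beta> where "u = vsmult t u0" "\<alpha> * fst u0 + \<beta> * snd u0 = 1"
proof -
  have "fst u \<noteq> 0 \<or> snd u \<noteq> 0" using assms by (auto simp: prod_eq_iff)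
  then obtain x y where d: "x * fst u + y * snd u \<noteq> 0"
    "x * fst u + y * snd u dvd fst u" "x * fst u + y * snd u dvd snd u"
    using poly_bezout by blast
  define t where "t = x * fst u + y * snd u"
  obtain g0 h0 where g0: "fst u = t * g0" and h0: "snd u = t * h0"
    using d(2,3) unfolding t_def by (metis dvdE)
  have "t * (x * g0 + y * h0) = x * fst u + y * snd u"
    by (simp add: g0 h0 algebra_simps)
  then have "t * (x * g0 + y * h0) = t * 1" by (simp add: t_def)
  then have "x * fst (g0, h0) + y * snd (g0, h0) = 1" using d(1) by (simp add: t_def)
  moreover have "u = vsmult t (g0, h0)" using g0 h0 by (simp add: vsmult_def prod_eq_iff)
  ultimately show ?thesis using that by blast
qed

lemma primitive_in_det2_eq_0:
  fixes t :: "'a::field poly"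
  assumes "lattice2 \<Gamma>" "primitive_in \<Gamma> (vsmult t u)" "\<alpha> * fst u + \<beta> * snd u = 1"
    "v \<in> \<Gamma>" "det2 u v = 0"
  shows "\<exists>a. v = vsmult a (vsmult t u)"
proof -
  have "t \<noteq> 0"
    using primitive_in_nonzero[OF assms(1,2)] by (auto simp: vsmult_def zero_prod_def)
  define c where "c = \<alpha> * fst v + \<beta> * snd v"
  have v: "v = vsmult c u" unfolding c_def by (rule det2_eq_0_imp_vsmult[OF assms(3,5)])
  then have "t dvd c"
    using primitive_in_dvd_multiple[OF assms(1,2) \<open>t \<noteq> 0\<close>] assms(4) by simp
  then obtain a where "c = t * a" by blast
  then show ?thesis using v by (auto simp: vsmult_def algebra_simps)
qed

lemma primitive_in_multiples_subset:
  fixes u :: "'a::field poly \<times> 'a poly"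
  assumes "u \<in> \<Gamma>"
  shows "{v. primitive_in \<Gamma> v \<and> (\<exists>a. v = vsmult a u)} \<subseteq> range (\<lambda>\<kappa>. vsmult [:\<kappa>:] u)"
proof
  fix v assume "v \<in> {v. primitive_in \<Gamma> v \<and> (\<exists>a. v = vsmult a u)}"
  then obtain a where "primitive_in \<Gamma> (vsmult a u)" "v = vsmult a u" by blast
  moreover have "a = [:coeff a 0:]"
    using primitive_in_vsmult_degree[OF calculation(1) assms] by (simp add: degree_0_id)
  ultimately show "v \<in> range (\<lambda>\<kappa>. vsmult [:\<kappa>:] u)" by (metis rangeI)
qed

lemma lattice2_det2_ideal:
  fixes u :: "'a::field poly \<times> 'a poly"
  assumes "lattice2 \<Gamma>" "v1 \<in> \<Gamma>" "det2 u v1 \<noteq> 0"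
  obtains w where "w \<in> \<Gamma>" "det2 u w \<noteq> 0" "\<And>v. v \<in> \<Gamma> \<Longrightarrow> det2 u w dvd det2 u v"
proof -
  have "\<exists>\<delta>\<in>det2 u ` \<Gamma>. \<delta> \<noteq> 0 \<and> (\<forall>x\<in>det2 u ` \<Gamma>. \<delta> dvd x)"
  proof (rule poly_ideal_principal)
    fix x y assume "x \<in> det2 u ` \<Gamma>" "y \<in> det2 u ` \<Gamma>"
    then obtain v w where "v \<in> \<Gamma>" "w \<in> \<Gamma>" "x + y = det2 u (v + w)" by (auto simp: det2_add)
    then show "x + y \<in> det2 u ` \<Gamma>" using assms(1) by (blast intro: lattice2_add)
  next
    fix a x assume "x \<in> det2 u ` \<Gamma>"
    then obtain v where "v \<in> \<Gamma>" "a * x = det2 u (vsmult a v)" by (auto simp: det2_vsmult)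
    then show "a * x \<in> det2 u ` \<Gamma>" using assms(1) by (blast intro: lattice2_vsmult)
  qed (use assms(2,3) in auto)
  then show ?thesis using that by blast
qed

lemma vol2_le_card_power:
  fixes t :: "'a::{finite,field} poly"
  assumes "lattice2 \<Gamma>" "\<alpha> * fst u + \<beta> * snd u = 1" "t \<noteq> 0" "vsmult t u \<in> \<Gamma>"
    "w \<in> \<Gamma>" "det2 u w \<noteq> 0"
  shows "vol2 \<Gamma> \<le> CARD('a) ^ (degree (det2 u w) + degree t)"
proof -
  define \<delta> where "\<delta> = det2 u w"
  define coset where "coset z = {z + v | v. v \<in> \<Gamma>}" for z
  define y where "y = (- \<beta>, \<alpha>)"
  have y: "det2 u y = 1" using assms(2) by (simp add: det2_def y_def algebra_simps)
  define R where "R = (\<lambda>(c, b). coset (vsmult c y + vsmult b u)) `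
    (polys_deg_lt (degree \<delta>) \<times> polys_deg_lt (degree t))"
  have "range coset \<subseteq> R"
  proof
    fix X assume "X \<in> range coset"
    then obtain z where X: "X = coset z" by blast
    define a where "a = det2 u z div \<delta>"
    define c where "c = det2 u z mod \<delta>"
    define z' where "z' = z - vsmult a w - vsmult c y"
    define c' where "c' = \<alpha> * fst z' + \<beta> * snd z'"
    define b where "b = c' mod t"
    define \<gamma> where "\<gamma> = vsmult a w + vsmult (c' div t) (vsmult t u)"
    have "det2 u z' = 0"
      by (simp add: z'_def a_def c_def \<delta>_def det2_diff det2_vsmult y minus_div_mult_eq_mod)
    then have "z' = vsmult c' u" unfolding c'_def by (rule det2_eq_0_imp_vsmult[OF assms(2)])
    also have "\<dots> = vsmult (b + c' div t * t) u" by (simp add: b_def)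
    also have "\<dots> = vsmult b u + vsmult (c' div t) (vsmult t u)"
      by (simp add: vsmult_def algebra_simps)
    finally have "z = (vsmult c y + vsmult b u) + \<gamma>"
      unfolding \<gamma>_def by (simp add: z'_def algebra_simps)
    then have "X = coset (vsmult c y + vsmult b u + \<gamma>)" by (simp add: X)
    also have "\<dots> = coset (vsmult c y + vsmult b u)"
      unfolding coset_def
      by (rule lattice2_coset_shift[OF assms(1)]) (use assms(1,4,5) in \<open>simp add: \<gamma>_def lattice2_add lattice2_vsmult\<close>)
    finally have "X = coset (vsmult c y + vsmult b u)" .
    moreover have "c \<in> polys_deg_lt (degree \<delta>)" "b \<in> polys_deg_lt (degree t)"
      using degree_mod_less assms(3,6) by (auto simp: polys_deg_lt_def c_def b_def \<delta>_def)
    ultimately show "X \<in> R" unfolding R_def by blast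
  qed
  then have "vol2 \<Gamma> \<le> card R"
    unfolding vol2_def coset_def[symmetric] R_def
    by (intro card_mono finite_imageI finite_cartesian_product finite_polys_deg_lt)
  also have "\<dots> \<le> card (polys_deg_lt (degree \<delta>) \<times> polys_deg_lt (degree t) :: ('a poly \<times> 'a poly) set)"
    unfolding R_def by (rule card_image_le) (simp add: finite_polys_deg_lt)
  also have "\<dots> = CARD('a) ^ (degree \<delta> + degree t)"
    by (simp add: card_cartesian_product card_polys_deg_lt power_add)
  finally show ?thesis unfolding \<delta>_def .
qed

lemma poly_box_vsmult_bound:
  fixes u :: "'a::idom poly \<times> 'a poly"
  assumes "u \<in> poly_box r s" "u \<noteq> 0"
  obtains k where "\<And>a. vsmult a u \<in> poly_box r s \<Longrightarrow> degree a \<le> k"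
    "\<And>v. v \<in> poly_box r s \<Longrightarrow> degree (det2 u v) + k \<le> r + s"
proof -
  obtain g h where u: "u = (g, h)" by (cases u)
  have gh: "g \<noteq> 0 \<or> h \<noteq> 0" "degree g \<le> r" "degree h \<le> s"
    using assms by (auto simp: u poly_box_def zero_prod_def)
  \<comment> \<open>the largest d with x^d u in the box\<close>
  define k where "k = (if g = 0 then s - degree h else if h = 0 then r - degree g
    else min (r - degree g) (s - degree h))"
  have kg: "degree g + k \<le> r" if "g \<noteq> 0" using that gh by (auto simp: k_def)
  have kh: "degree h + k \<le> s" if "h \<noteq> 0" using that gh by (auto simp: k_def)
  have "degree a \<le> k" if a: "vsmult a u \<in> poly_box r s" for a
  proof (cases "a = 0")
    case False
    have "g \<noteq> 0 \<Longrightarrow> degree a + degree g \<le> r" "h \<noteq> 0 \<Longrightarrow> degree a + degree h \<le> s"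
      using a False by (auto simp: poly_box_def vsmult_def u degree_mult_eq)
    then show ?thesis using gh by (auto simp: k_def)
  qed simp
  moreover have "degree (det2 u v) + k \<le> r + s" if v: "v \<in> poly_box r s" for v
  proof -
    have "degree (g * snd v) \<le> r + s - k"
      using degree_mult_le[of g "snd v"] kg v by (cases "g = 0") (auto simp: poly_box_def)
    moreover have "degree (h * fst v) \<le> r + s - k"
      using degree_mult_le[of h "fst v"] kh v by (cases "h = 0") (auto simp: poly_box_def)
    ultimately have "degree (det2 u v) \<le> r + s - k"
      unfolding det2_def u by (simp add: degree_diff_le)
    moreover have "k \<le> r + s" using kg kh gh by fastforce
    ultimately show ?thesis by linarith
  qed
  ultimately show ?thesis using that by blast
qed

lemma card_poly_box_det2_fiber_le:
  fixes u :: "'a::{finite,field} poly \<times> 'a poly"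
  assumes "lattice2 \<Gamma>"
    and kernel: "\<And>v. v \<in> \<Gamma> \<Longrightarrow> det2 u0 v = 0 \<Longrightarrow> \<exists>a. v = vsmult a u"
    and bound: "\<And>a. vsmult a u \<in> poly_box r s \<Longrightarrow> degree a \<le> k"
    and v: "v \<in> \<Gamma> \<inter> poly_box r s"
  shows "card {w \<in> \<Gamma> \<inter> poly_box r s. det2 u0 w = det2 u0 v} \<le> CARD('a) ^ Suc k"
proof -
  have "{w \<in> \<Gamma> \<inter> poly_box r s. det2 u0 w = det2 u0 v}
      \<subseteq> (\<lambda>a. v + vsmult a u) ` polys_deg_lt (Suc k)"
  proof
    fix w assume w: "w \<in> {w \<in> \<Gamma> \<inter> poly_box r s. det2 u0 w = det2 u0 v}"
    then have "w - v \<in> \<Gamma>" "det2 u0 (w - v) = 0"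
      using assms(1) v by (auto simp: lattice2_diff det2_diff)
    then obtain a where a: "w - v = vsmult a u" using kernel by blast
    moreover have "w - v \<in> poly_box r s" using w v by (simp add: poly_box_diff)
    ultimately have "a \<in> polys_deg_lt (Suc k)" using bound by (fastforce simp: polys_deg_lt_def)
    moreover have "w = v + vsmult a u" using a by (metis add.commute diff_add_cancel)
    ultimately show "w \<in> (\<lambda>a. v + vsmult a u) ` polys_deg_lt (Suc k)" by blast
  qed
  then have "card {w \<in> \<Gamma> \<inter> poly_box r s. det2 u0 w = det2 u0 v}
      \<le> card ((\<lambda>a. v + vsmult a u) ` polys_deg_lt (Suc k))"
    by (intro card_mono finite_imageI finite_polys_deg_lt)
  also have "\<dots> \<le> CARD('a) ^ Suc k"
    using card_image_le[OF finite_polys_deg_lt] by (metis card_polys_deg_lt)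
  finally show ?thesis .
qed

lemma card_det2_image_poly_box_le:
  fixes t \<delta> :: "'a::{finite,field} poly"
  assumes "t \<noteq> 0" "\<delta> \<noteq> 0" "\<And>v. v \<in> \<Gamma> \<Longrightarrow> \<delta> dvd det2 u v"
    and k: "\<And>v. v \<in> poly_box r s \<Longrightarrow> degree (t * det2 u v) + k \<le> r + s"
  shows "card (det2 u ` (\<Gamma> \<inter> poly_box r s)) \<le> CARD('a) ^ Suc (r + s - k - degree t - degree \<delta>)"
proof -
  define N where "N = r + s - k - degree t - degree \<delta>"
  have "det2 u ` (\<Gamma> \<inter> poly_box r s) \<subseteq> (\<lambda>c. \<delta> * c) ` polys_deg_lt (Suc N)"
  proof
    fix x assume "x \<in> det2 u ` (\<Gamma> \<inter> poly_box r s)"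
    then obtain v where v: "v \<in> \<Gamma>" "v \<in> poly_box r s" "x = det2 u v" by blast
    then obtain c where c: "x = \<delta> * c" using assms(3) by blast
    have "c \<in> polys_deg_lt (Suc N)"
    proof (cases "c = 0")
      case False
      have "degree (t * det2 u v) = degree t + degree \<delta> + degree c"
        unfolding v(3)[symmetric] c using False assms(1,2) by (simp add: degree_mult_eq)
      then have "degree t + degree \<delta> + degree c + k \<le> r + s" using k[OF v(2)] by simp
      then have "degree c < Suc N" unfolding N_def by linarith
      then show ?thesis by (simp add: polys_deg_lt_def)
    qed (simp add: polys_deg_lt_def)
    then show "x \<in> (\<lambda>c. \<delta> * c) ` polys_deg_lt (Suc N)" using c by blast
  qed
  then have "card (det2 u ` (\<Gamma> \<inter> poly_box r s)) \<le> card ((\<lambda>c. \<delta> * c) ` polys_deg_lt (Suc N))"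
    by (intro card_mono finite_imageI finite_polys_deg_lt)
  also have "\<dots> \<le> CARD('a) ^ Suc N"
    using card_image_le[OF finite_polys_deg_lt] by (metis card_polys_deg_lt)
  finally show ?thesis unfolding N_def .
qed

lemma card_lattice2_poly_box_le:
  fixes t :: "'a::{finite,field} poly"
  assumes "lattice2 \<Gamma>" "primitive_in \<Gamma> (vsmult t u)" "\<alpha> * fst u + \<beta> * snd u = 1"
    "vsmult t u \<in> poly_box r s" "w \<in> \<Gamma>" "\<And>v. v \<in> \<Gamma> \<Longrightarrow> det2 u w dvd det2 u v"
    "v1 \<in> \<Gamma> \<inter> poly_box r s" "det2 u v1 \<noteq> 0"
  shows "card (\<Gamma> \<inter> poly_box r s) \<le> CARD('a) ^ (r + s + 2 - degree t - degree (det2 u w))"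
proof -
  define \<delta> where "\<delta> = det2 u w"
  have "vsmult t u \<noteq> 0" by (rule primitive_in_nonzero[OF assms(1,2)])
  then have "t \<noteq> 0" by (auto simp: vsmult_def zero_prod_def)
  obtain k where k_mult: "\<And>a. vsmult a (vsmult t u) \<in> poly_box r s \<Longrightarrow> degree a \<le> k"
    and k_det2: "\<And>v. v \<in> poly_box r s \<Longrightarrow> degree (t * det2 u v) + k \<le> r + s"
    using poly_box_vsmult_bound[OF assms(4) \<open>vsmult t u \<noteq> 0\<close>] unfolding det2_vsmult_left by blast
  have "\<delta> \<noteq> 0" using assms(6)[of v1] assms(7,8) by (auto simp: \<delta>_def)
  have "degree \<delta> \<le> degree (det2 u v1)"
    using dvd_imp_degree_le[OF assms(6)[of v1]] assms(7,8) by (simp add: \<delta>_def)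
  then have deg_sum: "degree t + degree \<delta> + k \<le> r + s"
    using k_det2[of v1] assms(7,8) \<open>t \<noteq> 0\<close> by (simp add: degree_mult_eq)
  define N where "N = r + s - k - degree t - degree \<delta>"
  have "card (det2 u ` (\<Gamma> \<inter> poly_box r s)) \<le> CARD('a) ^ Suc N"
    unfolding N_def using card_det2_image_poly_box_le[OF \<open>t \<noteq> 0\<close> \<open>\<delta> \<noteq> 0\<close> _ k_det2] assms(6)
    by (simp add: \<delta>_def)
  moreover have "card (\<Gamma> \<inter> poly_box r s) \<le> card (det2 u ` (\<Gamma> \<inter> poly_box r s)) * CARD('a) ^ Suc k"
  proof (rule card_le_card_image_mult)
    show "finite (\<Gamma> \<inter> poly_box r s)" by (simp add: finite_poly_box)
    show "card {x \<in> \<Gamma> \<inter> poly_box r s. det2 u x = y} \<le> CARD('a) ^ Suc k"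
      if "y \<in> det2 u ` (\<Gamma> \<inter> poly_box r s)" for y
      using that card_poly_box_det2_fiber_le[OF assms(1) primitive_in_det2_eq_0[OF assms(1-3)] k_mult]
      by blast
  qed
  ultimately have "card (\<Gamma> \<inter> poly_box r s) \<le> CARD('a) ^ Suc N * CARD('a) ^ Suc k"
    by (meson le_trans mult_le_mono1)
  also have "\<dots> = CARD('a) ^ (Suc N + Suc k)" by (simp add: power_add)
  also have "Suc N + Suc k = r + s + 2 - degree t - degree \<delta>" using deg_sum by (simp add: N_def)
  finally show ?thesis unfolding \<delta>_def .
qed

lemma card_primitive_poly_box_line_le:
  fixes t :: "'a::{finite,field} poly"
  assumes "lattice2 \<Gamma>" "primitive_in \<Gamma> (vsmult t u)" "\<alpha> * fst u + \<beta> * snd u = 1"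
    "\<And>v. v \<in> \<Gamma> \<inter> poly_box r s \<Longrightarrow> det2 u v = 0"
  shows "card {v. primitive_in \<Gamma> v \<and> v \<in> poly_box r s} \<le> CARD('a)"
proof -
  have "vsmult t u \<in> \<Gamma>" using assms(2) by (simp add: primitive_in_def)
  have "{v. primitive_in \<Gamma> v \<and> v \<in> poly_box r s}
      \<subseteq> {v. primitive_in \<Gamma> v \<and> (\<exists>a. v = vsmult a (vsmult t u))}"
    using primitive_in_det2_eq_0[OF assms(1-3)] assms(4) by (auto simp: primitive_in_def)
  also have "\<dots> \<subseteq> range (\<lambda>\<kappa>. vsmult [:\<kappa>:] (vsmult t u))"
    by (rule primitive_in_multiples_subset[OF \<open>vsmult t u \<in> \<Gamma>\<close>])
  finally have "card {v. primitive_in \<Gamma> v \<and> v \<in> poly_box r s}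
      \<le> card (range (\<lambda>\<kappa>. vsmult [:\<kappa>:] (vsmult t u)))"
    by (rule card_mono[rotated]) simp
  also have "\<dots> \<le> CARD('a)" by (rule card_image_le) simp
  finally show ?thesis .
qed

lemma card_primitive_poly_box_plane_le:
  fixes t :: "'a::{finite,field} poly"
  assumes "lattice2 \<Gamma>" "vol2 \<Gamma> = CARD('a) ^ m"
    "primitive_in \<Gamma> (vsmult t u)" "\<alpha> * fst u + \<beta> * snd u = 1" "vsmult t u \<in> poly_box r s"
    "v1 \<in> \<Gamma> \<inter> poly_box r s" "det2 u v1 \<noteq> 0"
  shows "card {v. primitive_in \<Gamma> v \<and> v \<in> poly_box r s} \<le> CARD('a) ^ (r + s + 2 - m)"
proof -
  obtain w where w: "w \<in> \<Gamma>" "det2 u w \<noteq> 0" "\<And>v. v \<in> \<Gamma> \<Longrightarrow> det2 u w dvd det2 u v"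
    using lattice2_det2_ideal[OF assms(1)] assms(6,7) by blast
  have "t \<noteq> 0"
    using primitive_in_nonzero[OF assms(1,3)] by (auto simp: vsmult_def zero_prod_def)
  moreover have "vsmult t u \<in> \<Gamma>" using assms(3) by (simp add: primitive_in_def)
  ultimately have "CARD('a) ^ m \<le> CARD('a) ^ (degree (det2 u w) + degree t)"
    using vol2_le_card_power[OF assms(1,4) _ _ w(1,2)] assms(2) by simp
  then have "m \<le> degree t + degree (det2 u w)"
    using card_field_ge_2[where 'a='a] by (simp add: power_le_imp_le_exp)
  then have "CARD('a) ^ (r + s + 2 - degree t - degree (det2 u w)) \<le> CARD('a) ^ (r + s + 2 - m)"
    using card_field_ge_2[where 'a='a] by (intro power_increasing) auto
  moreover have "card {v. primitive_in \<Gamma> v \<and> v \<in> poly_box r s} \<le> card (\<Gamma> \<inter> poly_box r s)"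
    by (intro card_mono) (auto simp: finite_poly_box primitive_in_def)
  ultimately show ?thesis
    using card_lattice2_poly_box_le[OF assms(1,3,4,5) w(1,3) assms(6,7)] by linarith
qed

lemma card_primitive_poly_box_le:
  fixes \<Gamma> :: "('a::{finite,field} poly \<times> 'a poly) set"
  assumes "lattice2 \<Gamma>" "vol2 \<Gamma> = CARD('a) ^ m"
  shows "card {v. primitive_in \<Gamma> v \<and> v \<in> poly_box r s} \<le> max CARD('a) (CARD('a) ^ (r + s + 2 - m))"
proof (cases "{v. primitive_in \<Gamma> v \<and> v \<in> poly_box r s} = {}")
  case False
  then obtain u0 where u0: "primitive_in \<Gamma> u0" "u0 \<in> poly_box r s" by blast
  obtain t u \<alpha> \<beta> where u: "u0 = vsmult t u" "\<alpha> * fst u + \<beta> * snd u = 1"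
    using vsmult_coprime_decomp primitive_in_nonzero[OF assms(1) u0(1)] by blast
  show ?thesis
  proof (cases "\<exists>v1 \<in> \<Gamma> \<inter> poly_box r s. det2 u v1 \<noteq> 0")
    case True
    then show ?thesis
      using card_primitive_poly_box_plane_le[OF assms u0(1)[unfolded u] u(2) u0(2)[unfolded u]] by fastforce
  next
    case False
    then show ?thesis
      using card_primitive_poly_box_line_le[OF assms(1) u0(1)[unfolded u] u(2)] by fastforce
  qed
next
  case True
  then show ?thesis by (simp only: card.empty zero_le)
qed

theorem mainTheorem9:
  fixes \<Gamma> :: "('a::{finite,field} poly \<times> 'a poly) set" and r s m :: nat
  assumes "lattice2 \<Gamma>"
    and "vol2 \<Gamma> = CARD('a) ^ m"
  shows "real (card {v. primitive_in \<Gamma> v \<and> degree (fst v) \<le> r \<and> degree (snd v) \<le> s})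
           \<le> max (real CARD('a)) (real CARD('a) powi (int r + int s - int m + 2))"
proof -
  have "card {v. primitive_in \<Gamma> v \<and> degree (fst v) \<le> r \<and> degree (snd v) \<le> s}
      \<le> max CARD('a) (CARD('a) ^ (r + s + 2 - m))"
    using card_primitive_poly_box_le[OF assms, of r s] unfolding poly_box_def mem_Collect_eq .
  then have "real (card {v. primitive_in \<Gamma> v \<and> degree (fst v) \<le> r \<and> degree (snd v) \<le> s})
      \<le> real (max CARD('a) (CARD('a) ^ (r + s + 2 - m)))"
    by (rule of_nat_mono)
  also have "\<dots> = max (real CARD('a)) (real CARD('a) ^ (r + s + 2 - m))" by (simp add: of_nat_max)
  also have "\<dots> \<le> max (real CARD('a)) (real CARD('a) powi (int r + int s - int m + 2))"
  proof (cases "m \<le> r + s + 2")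
    case True
    then have "int r + int s - int m + 2 = int (r + s + 2 - m)" by simp
    then show ?thesis by (simp only: power_int_of_nat order_refl)
  next
    case False
    then show ?thesis using card_field_ge_2[where 'a='a] by simp
  qed
  finally show ?thesis .
qed

end
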